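(* Let $t$ be a positive integer and let $G$ be a finite group (not necessarily abelian, written additively) such that the smallest prime divisor $p$ of $|G|$ satisfies $p>t(2t+1)$. Let $M=[a_1^{\lambda_1},a_2^{\lambda_2}]$ be a multiset of non-identity elements of $G$ with $\lambda_1\ge 2t$. Then there exists a realization $W=(w_0,\dots,w_{\lambda_1+\lambda_2})$ of $M$ such that (a) $w_i=w_{i-1}+a_1$ for all $i\in\{1,\dots,t\}$; (b) $w_i=w_{i-1}+a_1$ for all $i\in\{\lambda_1+\lambda_2-(t-1),\dots,\lambda_1+\lambda_2\}$; (c) $w_i\ne w_j$ whenever $1\le|i-j|\le t$.
   Context: $[a_1^{\lambda_1},a_2^{\lambda_2}]$ denotes the multiset containing $a_1$ with multiplicity $\lambda_1$ and $a_2$ with multiplicity $\lambda_2$. For a multiset $M$, $\pm M$ denotes the multiset $[x,-x : x\in M]$ (each element of $M$ contributes both $x$ and $-x$, with multiplicity). A walk $W=(w_0,\dots,w_\ell)$ in $G$ has differences $\delta_i$ defined by $w_i=w_{i-1}+\delta_i$ ($1\le i\le\ell$), and $\Delta(W)=\pm[\delta_1,\dots,\delta_\ell]$. A realization of $M$ is a walk $W$ (in the Cayley graph $Cay[G:\pm M]$, vertices may repeat) with $\Delta(W)=\pm M$; equivalently, there is an ordering $(x_1,\dots,x_\ell)$ of $M$ and signs $\varepsilon_i\in\{\pm1\}$ with $w_i=w_{i-1}+\varepsilon_i x_i$. *)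

theory Defs
  imports "HOL-Algebra.Algebra" "HOL-Library.Multiset" "HOL-Computational_Algebra.Primes"
begin

text \<open>The sign True stands for +1, False for -1.\<close>
definition realization :: "('a, 'b) monoid_scheme \<Rightarrow> 'a multiset \<Rightarrow> (nat \<Rightarrow> 'a) \<Rightarrow> bool" where
  "realization G M w \<longleftrightarrow> w 0 \<in> carrier G \<and>
     (\<exists>(x :: nat \<Rightarrow> 'a) (\<epsilon> :: nat \<Rightarrow> bool).
        mset (map x [1..<size M + 1]) = M \<and>
        (\<forall>i\<in>{1..size M}. w i = w (i - 1) \<otimes>\<^bsub>G\<^esub> (if \<epsilon> i then x i else inv\<^bsub>G\<^esub> (x i))))"

end

theory Submission
  imports Defs
begin

(* Walk t steps of a1, then l2 steps of c, where c is a2 or its inverse, then the remaining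
   l1 - t >= t steps of a1. A run of at most t consecutive steps multiplies to a1^p c^q a1^r,
   a conjugate of c^q a1^(p + r), so no vertex recurs within distance t as soon as
   c^m a1^k is never 1 for 0 < m + k <= t. This fails for at most one choice of c:
   a2^m a1^k = 1 and a2^-m' a1^k' = 1 would give a1^(k' m + k m') = 1 with
   0 < k' m + k m' <= 2 t^2, while a1 has order divisible by a prime p > t (2 t + 1). *)

lemma (in group) pow_ne_one_if_prime_divisors_gt:
  assumes x: "x \<in> carrier G" "x \<noteq> \<one>"
    and primes: "\<forall>p::nat. Factorial_Ring.prime p \<and> p dvd order G \<longrightarrow> N < p"
    and n: "0 < n" "n \<le> N"
  shows "x [^] n \<noteq> \<one>"
proof
  assume "x [^] n = \<one>"
  then have ord_dvd: "ord x dvd n" using pow_eq_id x(1) by simp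
  have "ord x \<noteq> 1" using ord_eq_1 x by simp
  then obtain p :: nat where p: "Factorial_Ring.prime p" "p dvd ord x"
    using prime_factor_nat by blast
  then have "N < p" using primes ord_dvd_group_order[OF x(1)] dvd_trans by blast
  moreover have "p \<le> n" using dvd_imp_le[OF dvd_trans[OF p(2) ord_dvd] n(1)] .
  ultimately show False using n(2) by simp
qed

lemma (in group) pow_mult_pow_eq_one_for_at_most_one_sign:
  assumes a: "a \<in> carrier G" "a \<noteq> \<one>" and b: "b \<in> carrier G"
    and primes: "\<forall>p::nat. Factorial_Ring.prime p \<and> p dvd order G \<longrightarrow> t * (2 * t + 1) < p"
    and rel: "b [^] m \<otimes> a [^] k = \<one>" "0 < m" "0 < k" "m + k \<le> t"
    and rel': "inv b [^] m' \<otimes> a [^] k' = \<one>" "0 < m'" "0 < k'" "m' + k' \<le> t"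
  shows False
proof -
  have "inv (a [^] k) = b [^] m" using inv_equality[OF rel(1)] a b by simp
  then have "inv (a [^] (k * m')) = b [^] (m * m')"
    using a b by (simp flip: nat_pow_pow nat_pow_inv)
  moreover have "inv (a [^] k') = inv (b [^] m')"
    using inv_equality[OF rel'(1)] a b by (simp add: nat_pow_inv)
  then have "a [^] k' = b [^] m'" using a b by (simp add: inj_on_eq_iff[OF inv_inj])
  then have "a [^] (k' * m) = b [^] (m' * m)"
    using a b by (simp flip: nat_pow_pow)
  ultimately have "inv (a [^] (k * m')) = a [^] (k' * m)" by (simp add: mult.commute)
  then have "a [^] (k' * m) \<otimes> a [^] (k * m') = \<one>"
    using a l_inv[of "a [^] (k * m')"] by simp
  then have "a [^] (k' * m + k * m') = \<one>" using a by (simp add: nat_pow_mult)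
  moreover have "k' * m + k * m' \<le> t * (2 * t + 1)"
  proof -
    have "k' * m \<le> t * t" "k * m' \<le> t * t" using rel rel' by (intro mult_le_mono; simp)+
    then show ?thesis by (simp add: algebra_simps)
  qed
  ultimately show False
    using pow_ne_one_if_prime_divisors_gt[OF a primes] rel rel' by simp
qed

lemma (in group) exists_sign_pow_mult_pow_ne_one:
  assumes a: "a \<in> carrier G" "a \<noteq> \<one>" and b: "b \<in> carrier G" "b \<noteq> \<one>"
    and primes: "\<forall>p::nat. Factorial_Ring.prime p \<and> p dvd order G \<longrightarrow> t * (2 * t + 1) < p"
  obtains c where "c \<in> {b, inv b}"
    and "\<And>m k. 0 < m + k \<Longrightarrow> m + k \<le> t \<Longrightarrow> c [^] m \<otimes> a [^] k \<noteq> \<one>"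
proof -
  define short_relation where "short_relation c \<longleftrightarrow>
    (\<exists>m k. 0 < m \<and> 0 < k \<and> m + k \<le> t \<and> c [^] m \<otimes> a [^] k = \<one>)" for c
  have "\<not> (short_relation b \<and> short_relation (inv b))"
    unfolding short_relation_def
    using pow_mult_pow_eq_one_for_at_most_one_sign[OF a b(1) primes] by blast
  then obtain c where c: "c \<in> {b, inv b}" "\<not> short_relation c" by blast
  have c_carrier: "c \<in> carrier G" "c \<noteq> \<one>"
    using c(1) b by (auto simp: eq_commute[of \<one> "inv b"])
  have small: "t \<le> t * (2 * t + 1)" by simp
  show thesis
  proof (rule that[OF c(1)])
    fix m k :: nat assume mk: "0 < m + k" "m + k \<le> t"
    consider "m = 0" | "k = 0" | "0 < m" "0 < k" by blast
    then show "c [^] m \<otimes> a [^] k \<noteq> \<one>"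
    proof cases
      case 1
      then show ?thesis using pow_ne_one_if_prime_divisors_gt[OF a primes, of k] mk small a by simp
    next
      case 2
      then show ?thesis
        using pow_ne_one_if_prime_divisors_gt[OF c_carrier primes, of m] mk small c_carrier by simp
    next
      case 3
      then show ?thesis using c(2) mk unfolding short_relation_def by blast
    qed
  qed
qed

definition (in monoid) prefix_prod :: "'a list \<Rightarrow> nat \<Rightarrow> 'a" where
  "prefix_prod xs k = foldr (\<otimes>) (take k xs) \<one>"

lemma (in monoid) foldr_mult_append:
  assumes "set xs \<subseteq> carrier G" "set ys \<subseteq> carrier G"
  shows "foldr (\<otimes>) (xs @ ys) \<one> = foldr (\<otimes>) xs \<one> \<otimes> foldr (\<otimes>) ys \<one>"
  using assms by (induction xs) (auto simp: m_assoc)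

lemma (in monoid) foldr_mult_replicate:
  assumes "x \<in> carrier G"
  shows "foldr (\<otimes>) (replicate n x) \<one> = x [^] n"
proof (induction n)
  case (Suc n)
  then show ?case using assms by (simp del: foldr_replicate) (metis nat_pow_Suc nat_pow_Suc2)
qed simp

lemma (in monoid) prefix_prod_closed [simp]:
  assumes "set xs \<subseteq> carrier G"
  shows "prefix_prod xs k \<in> carrier G"
  unfolding prefix_prod_def using assms set_take_subset by (meson multlist_closed order_trans)

lemma (in monoid) prefix_prod_add:
  assumes "set xs \<subseteq> carrier G"
  shows "prefix_prod xs (i + n) = prefix_prod xs i \<otimes> foldr (\<otimes>) (take n (drop i xs)) \<one>"
  using assms set_take_subset set_drop_subset
  unfolding prefix_prod_def take_add by (metis foldr_mult_append order_trans)

lemma (in monoid) prefix_prod_Suc: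
  assumes "set xs \<subseteq> carrier G" "i < length xs"
  shows "prefix_prod xs (Suc i) = prefix_prod xs i \<otimes> xs ! i"
proof -
  have "xs ! i \<in> carrier G" using assms nth_mem by blast
  then show ?thesis using assms prefix_prod_add[of xs i 1] by (simp add: take_Suc_conv_app_nth)
qed

lemma (in group) realization_prefix_prod:
  assumes signs: "list_all2 (\<lambda>x y. x = y \<or> x = inv y) xs ys" and xs: "set xs \<subseteq> carrier G"
  shows "realization G (mset ys) (prefix_prod xs)"
  unfolding realization_def
proof (intro conjI exI ballI)
  have len: "length xs = length ys" using signs by (rule list_all2_lengthD)
  show "prefix_prod xs 0 \<in> carrier G" using xs by simp
  have "map (\<lambda>i. ys ! (i - 1)) [1..<length ys + 1] = ys"
    by (simp add: map_Suc_upt[symmetric] comp_def map_nth del: upt_Suc)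
  then show "mset (map (\<lambda>i. ys ! (i - 1)) [1..<size (mset ys) + 1]) = mset ys" by simp
  fix i assume "i \<in> {1..size (mset ys)}"
  then have i: "i - 1 < length xs" "Suc (i - 1) = i" using len by auto
  then have "xs ! (i - 1) = ys ! (i - 1) \<or> xs ! (i - 1) = inv (ys ! (i - 1))"
    using list_all2_nthD[OF signs] len by simp
  then have "xs ! (i - 1) = (if xs ! (i - 1) = ys ! (i - 1) then ys ! (i - 1) else inv (ys ! (i - 1)))"
    by auto
  with prefix_prod_Suc[OF xs i(1)] i(2)
  show "prefix_prod xs i = prefix_prod xs (i - 1) \<otimes>
      (if xs ! (i - 1) = ys ! (i - 1) then ys ! (i - 1) else inv (ys ! (i - 1)))"
    by simp
qed

lemma take_drop_three_blocks:
  assumes "i + n \<le> k + l + m"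
  shows "\<exists>p q r. take n (drop i (replicate k x @ replicate l y @ replicate m x)) =
                  replicate p x @ replicate q y @ replicate r x \<and> p + q + r = n"
proof -
  define p where "p = min n (k - i)"
  define q where "q = min (n - (k - i)) (l - (i - k))"
  define r where "r = min (n - (k - i + (l - (i - k)))) (m - (i - (k + l)))"
  have window: "take n (drop i (replicate k x @ replicate l y @ replicate m x)) =
      replicate p x @ replicate q y @ replicate r x"
    by (simp add: p_def q_def r_def)
  have "p + q + r = length (take n (drop i (replicate k x @ replicate l y @ replicate m x)))"
    unfolding window by simp
  also have "\<dots> = n" using assms by (simp del: take_append drop_append)
  finally show ?thesis using window by blast
qed

lemma (in monoid) three_block_prefix_prod_outer_step:
  assumes "a \<in> carrier G" "c \<in> carrier G" "i \<in> {1..k} \<union> {k + l + 1..k + l + m}"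
  shows "prefix_prod (replicate k a @ replicate l c @ replicate m a) i =
         prefix_prod (replicate k a @ replicate l c @ replicate m a) (i - 1) \<otimes> a"
proof -
  let ?xs = "replicate k a @ replicate l c @ replicate m a"
  have xs: "set ?xs \<subseteq> carrier G" using assms(1,2) by auto
  have "i - 1 < length ?xs" "?xs ! (i - 1) = a" "Suc (i - 1) = i"
    using assms(3) by (auto simp: nth_append)
  then show ?thesis using prefix_prod_Suc[OF xs, of "i - 1"] by simp
qed

lemma (in group) three_block_prefix_prod_ne:
  assumes a: "a \<in> carrier G" and c: "c \<in> carrier G"
    and no_relation: "\<And>m k. 0 < m + k \<Longrightarrow> m + k \<le> t \<Longrightarrow> c [^] m \<otimes> a [^] k \<noteq> \<one>"
    and ij: "i < j" "j \<le> i + t" "j \<le> k + l + m"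
  shows "prefix_prod (replicate k a @ replicate l c @ replicate m a) i \<noteq>
         prefix_prod (replicate k a @ replicate l c @ replicate m a) j"
proof
  let ?xs = "replicate k a @ replicate l c @ replicate m a"
  assume eq: "prefix_prod ?xs i = prefix_prod ?xs j"
  obtain p q r where window: "take (j - i) (drop i ?xs) = replicate p a @ replicate q c @ replicate r a"
    and pqr: "p + q + r = j - i"
    using take_drop_three_blocks[of i "j - i" k l m a c] ij by auto
  have xs: "set ?xs \<subseteq> carrier G" using a c by auto
  have "foldr (\<otimes>) (take (j - i) (drop i ?xs)) \<one> = a [^] p \<otimes> (c [^] q \<otimes> a [^] r)"
    unfolding window using a c
    by (simp add: foldr_mult_append foldr_mult_replicate set_replicate_conv_if
        del: foldr_append foldr_replicate)
  then have "prefix_prod ?xs j = prefix_prod ?xs i \<otimes> (a [^] p \<otimes> (c [^] q \<otimes> a [^] r))"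
    using prefix_prod_add[OF xs, of i "j - i"] ij(1) by simp
  with eq have "prefix_prod ?xs i = prefix_prod ?xs i \<otimes> (a [^] p \<otimes> (c [^] q \<otimes> a [^] r))"
    by (rule trans)
  then have "a [^] p \<otimes> (c [^] q \<otimes> a [^] r) = \<one>" using xs a c by simp
  then have "c [^] q \<otimes> a [^] r \<otimes> a [^] p = \<one>" by (rule inv_comm) (simp_all add: a c)
  moreover have "c [^] q \<otimes> a [^] (r + p) = c [^] q \<otimes> a [^] r \<otimes> a [^] p"
    using a c by (simp add: m_assoc flip: nat_pow_mult)
  ultimately have "c [^] q \<otimes> a [^] (r + p) = \<one>" by simp
  moreover have "0 < q + (r + p)" "q + (r + p) \<le> t" using pqr ij by linarith+
  ultimately show False using no_relation[of q "r + p"] by blast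
qed

lemma pairwise_ne_within_distance:
  assumes "\<And>i j. i < j \<Longrightarrow> j \<le> i + t \<Longrightarrow> j \<le> n \<Longrightarrow> w i \<noteq> w j"
  shows "\<forall>i\<in>{0..n}. \<forall>j\<in>{0..n}. 1 \<le> \<bar>int i - int j\<bar> \<and> \<bar>int i - int j\<bar> \<le> int t \<longrightarrow> w i \<noteq> w j"
proof (intro ballI impI)
  fix i j assume "i \<in> {0..n}" "j \<in> {0..n}" "1 \<le> \<bar>int i - int j\<bar> \<and> \<bar>int i - int j\<bar> \<le> int t"
  then have "i < j \<and> j \<le> i + t \<and> j \<le> n \<or> j < i \<and> i \<le> j + t \<and> i \<le> n" by auto
  then show "w i \<noteq> w j" using assms by metis
qed

theorem proposition3p2:
  fixes G :: "('a, 'b) monoid_scheme" and t l1 l2 :: nat and a1 a2 :: 'a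
  assumes "group G" and "finite (carrier G)"
    and "t \<ge> 1"
    and "\<forall>p::nat. Factorial_Ring.prime p \<and> p dvd order G \<longrightarrow> p > t * (2 * t + 1)"
    and "a1 \<in> carrier G" and "a2 \<in> carrier G"
    and "a1 \<noteq> \<one>\<^bsub>G\<^esub>" and "a2 \<noteq> \<one>\<^bsub>G\<^esub>"
    and "l1 \<ge> 2 * t"
  shows "\<exists>w. realization G (replicate_mset l1 a1 + replicate_mset l2 a2) w \<and>
           (\<forall>i\<in>{1..t}. w i = w (i - 1) \<otimes>\<^bsub>G\<^esub> a1) \<and>
           (\<forall>i\<in>{l1 + l2 - (t - 1)..l1 + l2}. w i = w (i - 1) \<otimes>\<^bsub>G\<^esub> a1) \<and>
           (\<forall>i\<in>{0..l1 + l2}. \<forall>j\<in>{0..l1 + l2}.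
              1 \<le> \<bar>int i - int j\<bar> \<and> \<bar>int i - int j\<bar> \<le> int t \<longrightarrow> w i \<noteq> w j)"
proof -
  interpret group G by fact
  obtain c where c: "c \<in> {a2, inv\<^bsub>G\<^esub> a2}"
    and no_relation: "\<And>m k. 0 < m + k \<Longrightarrow> m + k \<le> t \<Longrightarrow>
      c [^]\<^bsub>G\<^esub> m \<otimes>\<^bsub>G\<^esub> a1 [^]\<^bsub>G\<^esub> k \<noteq> \<one>\<^bsub>G\<^esub>"
    using exists_sign_pow_mult_pow_ne_one[OF assms(5,7,6,8,4)] by blast
  have c_carrier: "c \<in> carrier G" using c assms(6) by auto
  define xs where "xs = replicate t a1 @ replicate l2 c @ replicate (l1 - t) a1"
  define ys where "ys = replicate t a1 @ replicate l2 a2 @ replicate (l1 - t) a1"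
  have "list_all2 (\<lambda>x y. x = y \<or> x = inv\<^bsub>G\<^esub> y) xs ys"
    unfolding xs_def ys_def using c by (intro list_all2_appendI) (auto simp: list_all2_conv_all_nth)
  then have "realization G (mset ys) (prefix_prod xs)"
    using assms(5) c_carrier by (intro realization_prefix_prod) (auto simp: xs_def)
  moreover have "mset ys = replicate_mset l1 a1 + replicate_mset l2 a2"
    using assms(9) by (auto simp: ys_def multiset_eq_iff)
  moreover have "prefix_prod xs i = prefix_prod xs (i - 1) \<otimes>\<^bsub>G\<^esub> a1"
    if "i \<in> {1..t} \<union> {l1 + l2 - (t - 1)..l1 + l2}" for i
  proof -
    have "i \<in> {1..t} \<union> {t + l2 + 1..t + l2 + (l1 - t)}" using that assms(3,9) by auto
    then show ?thesis unfolding xs_def by (rule three_block_prefix_prod_outer_step[OF assms(5) c_carrier])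
  qed
  moreover have "prefix_prod xs i \<noteq> prefix_prod xs j" if "i < j" "j \<le> i + t" "j \<le> l1 + l2" for i j
    using three_block_prefix_prod_ne[OF assms(5) c_carrier no_relation that(1,2)] that(3) assms(9)
    unfolding xs_def by auto
  then have "\<forall>i\<in>{0..l1 + l2}. \<forall>j\<in>{0..l1 + l2}.
      1 \<le> \<bar>int i - int j\<bar> \<and> \<bar>int i - int j\<bar> \<le> int t \<longrightarrow> prefix_prod xs i \<noteq> prefix_prod xs j"
    by (rule pairwise_ne_within_distance)
  ultimately show ?thesis by auto
qed

end
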